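(* Let $(G,\cdot,N,\star,\odot)$ be a left skew bracoid and $(H,\circ)$ a group. Assume $\boxdot$ is a transitive right action of $(H,\circ)$ on $N$ such that $g\odot(\eta\boxdot h)=(g\odot\eta)\boxdot h$ for all $g\in G$, $h\in H$, $\eta\in N$. Then for all $g\in G$, $\eta\in N$, $h\in H$, $$(g\odot\eta)^{\beta(h)}=({}^{\alpha(g)}(\eta^{\beta(h)}))\star(\eta^{\beta(h)})\star({}^{\alpha(g)}(e_N\boxdot h)).$$
   Context: For a group $(N,\star)$, $e_N$ denotes its identity and $\overline{\eta}$ the inverse of $\eta$. A left skew bracoid is $(G,\cdot,N,\star,\odot)$ with $(G,\cdot),(N,\star)$ groups and $\odot$ a transitive left action of $G$ on $N$ with $g\odot(\mu\star\eta)=(g\odot\mu)\star\overline{(g\odot e_N)}\star(g\odot\eta)$ for all $g\in G$, $\mu,\eta\in N$. For $g\in G$, ${}^{\alpha(g)}\eta=\overline{(g\odot e_N)}\star(g\odot\eta)\star\overline{\eta}$. For $h\in H$, $\eta^{\beta(h)}=\overline{\eta}\star(\eta\boxdot h)\star\overline{(e_N\boxdot h)}$. *)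

theory Defs
  imports "HOL-Algebra.Group"
begin

definition left_action :: "('g, 'a) monoid_scheme \<Rightarrow> ('n, 'b) monoid_scheme \<Rightarrow> ('g \<Rightarrow> 'n \<Rightarrow> 'n) \<Rightarrow> bool" where
  "left_action G N act \<longleftrightarrow>
     (\<forall>g\<in>carrier G. \<forall>\<eta>\<in>carrier N. act g \<eta> \<in> carrier N) \<and>
     (\<forall>\<eta>\<in>carrier N. act \<one>\<^bsub>G\<^esub> \<eta> = \<eta>) \<and>
     (\<forall>g\<in>carrier G. \<forall>h\<in>carrier G. \<forall>\<eta>\<in>carrier N. act (g \<otimes>\<^bsub>G\<^esub> h) \<eta> = act g (act h \<eta>))"

definition transitive_left_action :: "('g, 'a) monoid_scheme \<Rightarrow> ('n, 'b) monoid_scheme \<Rightarrow> ('g \<Rightarrow> 'n \<Rightarrow> 'n) \<Rightarrow> bool" where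
  "transitive_left_action G N act \<longleftrightarrow> left_action G N act \<and>
     (\<forall>\<mu>\<in>carrier N. \<forall>\<eta>\<in>carrier N. \<exists>g\<in>carrier G. act g \<mu> = \<eta>)"

definition right_action :: "('h, 'a) monoid_scheme \<Rightarrow> ('n, 'b) monoid_scheme \<Rightarrow> ('n \<Rightarrow> 'h \<Rightarrow> 'n) \<Rightarrow> bool" where
  "right_action H N ract \<longleftrightarrow>
     (\<forall>h\<in>carrier H. \<forall>\<eta>\<in>carrier N. ract \<eta> h \<in> carrier N) \<and>
     (\<forall>\<eta>\<in>carrier N. ract \<eta> \<one>\<^bsub>H\<^esub> = \<eta>) \<and>
     (\<forall>h\<in>carrier H. \<forall>k\<in>carrier H. \<forall>\<eta>\<in>carrier N. ract \<eta> (h \<otimes>\<^bsub>H\<^esub> k) = ract (ract \<eta> h) k)"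

definition transitive_right_action :: "('h, 'a) monoid_scheme \<Rightarrow> ('n, 'b) monoid_scheme \<Rightarrow> ('n \<Rightarrow> 'h \<Rightarrow> 'n) \<Rightarrow> bool" where
  "transitive_right_action H N ract \<longleftrightarrow> right_action H N ract \<and>
     (\<forall>\<mu>\<in>carrier N. \<forall>\<eta>\<in>carrier N. \<exists>h\<in>carrier H. ract \<mu> h = \<eta>)"

definition left_skew_bracoid :: "('g, 'a) monoid_scheme \<Rightarrow> ('n, 'b) monoid_scheme \<Rightarrow> ('g \<Rightarrow> 'n \<Rightarrow> 'n) \<Rightarrow> bool" where
  "left_skew_bracoid G N act \<longleftrightarrow> group G \<and> group N \<and> transitive_left_action G N act \<and>
     (\<forall>g\<in>carrier G. \<forall>\<mu>\<in>carrier N. \<forall>\<eta>\<in>carrier N.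
        act g (\<mu> \<otimes>\<^bsub>N\<^esub> \<eta>) = act g \<mu> \<otimes>\<^bsub>N\<^esub> inv\<^bsub>N\<^esub> (act g \<one>\<^bsub>N\<^esub>) \<otimes>\<^bsub>N\<^esub> act g \<eta>)"

definition alpha :: "('n, 'b) monoid_scheme \<Rightarrow> ('g \<Rightarrow> 'n \<Rightarrow> 'n) \<Rightarrow> 'g \<Rightarrow> 'n \<Rightarrow> 'n" where
  "alpha N act g \<eta> = inv\<^bsub>N\<^esub> (act g \<one>\<^bsub>N\<^esub>) \<otimes>\<^bsub>N\<^esub> act g \<eta> \<otimes>\<^bsub>N\<^esub> inv\<^bsub>N\<^esub> \<eta>"

definition beta :: "('n, 'b) monoid_scheme \<Rightarrow> ('n \<Rightarrow> 'h \<Rightarrow> 'n) \<Rightarrow> 'h \<Rightarrow> 'n \<Rightarrow> 'n" where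
  "beta N ract h \<eta> = inv\<^bsub>N\<^esub> \<eta> \<otimes>\<^bsub>N\<^esub> ract \<eta> h \<otimes>\<^bsub>N\<^esub> inv\<^bsub>N\<^esub> (ract \<one>\<^bsub>N\<^esub> h)"

end

theory Submission
  imports Defs
begin

text \<open>Put \<lambda> g \<mu> = (g \<odot> e)\<inverse> \<star> (g \<odot> \<mu>). The bracoid axiom says exactly that each \<lambda> g is an
  endomorphism of N, and \<alpha>(g) \<eta> = \<lambda> g \<eta> \<star> \<eta>\<inverse>. Both sides of the identity then collapse to
  \<lambda> g (\<eta>\<inverse> \<star> (\<eta> \<boxdot> h)) \<star> (e \<boxdot> h)\<inverse>: the left side because \<odot> commutes with \<boxdot>, the right
  side because \<lambda> g is multiplicative and \<alpha>(g) \<nu> \<star> \<nu> = \<lambda> g \<nu>.\<close>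

definition bracoid_lambda :: "('n, 'b) monoid_scheme \<Rightarrow> ('g \<Rightarrow> 'n \<Rightarrow> 'n) \<Rightarrow> 'g \<Rightarrow> 'n \<Rightarrow> 'n" where
  "bracoid_lambda N act g \<mu> = inv\<^bsub>N\<^esub> (act g \<one>\<^bsub>N\<^esub>) \<otimes>\<^bsub>N\<^esub> act g \<mu>"

lemma left_skew_bracoid_group: "left_skew_bracoid G N act \<Longrightarrow> group N"
  unfolding left_skew_bracoid_def by blast

lemma left_skew_bracoid_act_closed:
  "left_skew_bracoid G N act \<Longrightarrow> g \<in> carrier G \<Longrightarrow> \<mu> \<in> carrier N \<Longrightarrow> act g \<mu> \<in> carrier N"
  unfolding left_skew_bracoid_def transitive_left_action_def left_action_def by blast

lemma left_skew_bracoid_act_mult: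
  "left_skew_bracoid G N act \<Longrightarrow> g \<in> carrier G \<Longrightarrow> \<mu> \<in> carrier N \<Longrightarrow> \<eta> \<in> carrier N \<Longrightarrow>
    act g (\<mu> \<otimes>\<^bsub>N\<^esub> \<eta>) = act g \<mu> \<otimes>\<^bsub>N\<^esub> inv\<^bsub>N\<^esub> (act g \<one>\<^bsub>N\<^esub>) \<otimes>\<^bsub>N\<^esub> act g \<eta>"
  unfolding left_skew_bracoid_def by blast

lemma right_action_closed:
  "right_action H N ract \<Longrightarrow> h \<in> carrier H \<Longrightarrow> \<eta> \<in> carrier N \<Longrightarrow> ract \<eta> h \<in> carrier N"
  unfolding right_action_def by blast

lemma bracoid_lambda_hom:
  assumes bracoid: "left_skew_bracoid G N act" and g: "g \<in> carrier G"
  shows "bracoid_lambda N act g \<in> hom N N"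
proof (rule homI)
  interpret N: group N using left_skew_bracoid_group[OF bracoid] .
  note act_closed = left_skew_bracoid_act_closed[OF bracoid g]
  show "bracoid_lambda N act g \<mu> \<in> carrier N" if "\<mu> \<in> carrier N" for \<mu>
    using that by (simp add: bracoid_lambda_def act_closed)
  show "bracoid_lambda N act g (\<mu> \<otimes>\<^bsub>N\<^esub> \<eta>) = bracoid_lambda N act g \<mu> \<otimes>\<^bsub>N\<^esub> bracoid_lambda N act g \<eta>"
    if "\<mu> \<in> carrier N" "\<eta> \<in> carrier N" for \<mu> \<eta>
    using that by (simp add: bracoid_lambda_def left_skew_bracoid_act_mult[OF bracoid g]
        act_closed N.m_assoc)
qed

lemma inv_act_mult_act:
  assumes bracoid: "left_skew_bracoid G N act" and g: "g \<in> carrier G"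
    and \<eta>: "\<eta> \<in> carrier N" and \<mu>: "\<mu> \<in> carrier N"
  shows "inv\<^bsub>N\<^esub> (act g \<eta>) \<otimes>\<^bsub>N\<^esub> act g \<mu> = bracoid_lambda N act g (inv\<^bsub>N\<^esub> \<eta> \<otimes>\<^bsub>N\<^esub> \<mu>)"
proof -
  interpret N: group N using left_skew_bracoid_group[OF bracoid] .
  interpret group_hom N N "bracoid_lambda N act g"
    using bracoid_lambda_hom[OF bracoid g] by unfold_locales
  note act_closed = left_skew_bracoid_act_closed[OF bracoid g]
  have "bracoid_lambda N act g (inv\<^bsub>N\<^esub> \<eta> \<otimes>\<^bsub>N\<^esub> \<mu>)
      = inv\<^bsub>N\<^esub> (bracoid_lambda N act g \<eta>) \<otimes>\<^bsub>N\<^esub> bracoid_lambda N act g \<mu>"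
    using \<eta> \<mu> by simp
  also have "\<dots> = inv\<^bsub>N\<^esub> (act g \<eta>) \<otimes>\<^bsub>N\<^esub> act g \<mu>"
    using \<eta> \<mu> by (simp add: bracoid_lambda_def act_closed N.inv_mult_group N.m_assoc[symmetric])
      (simp add: act_closed N.m_assoc)
  finally show ?thesis ..
qed

lemma alpha_mult_mult_alpha:
  assumes bracoid: "left_skew_bracoid G N act" and g: "g \<in> carrier G"
    and \<nu>: "\<nu> \<in> carrier N" and \<mu>: "\<mu> \<in> carrier N"
  shows "alpha N act g \<nu> \<otimes>\<^bsub>N\<^esub> \<nu> \<otimes>\<^bsub>N\<^esub> alpha N act g \<mu>
    = bracoid_lambda N act g (\<nu> \<otimes>\<^bsub>N\<^esub> \<mu>) \<otimes>\<^bsub>N\<^esub> inv\<^bsub>N\<^esub> \<mu>"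
proof -
  interpret N: group N using left_skew_bracoid_group[OF bracoid] .
  interpret group_hom N N "bracoid_lambda N act g"
    using bracoid_lambda_hom[OF bracoid g] by unfold_locales
  have alpha_eq: "alpha N act g \<xi> = bracoid_lambda N act g \<xi> \<otimes>\<^bsub>N\<^esub> inv\<^bsub>N\<^esub> \<xi>"
    if "\<xi> \<in> carrier N" for \<xi>
    using that by (simp add: alpha_def bracoid_lambda_def left_skew_bracoid_act_closed[OF bracoid g])
  show ?thesis
    using \<nu> \<mu> by (simp add: alpha_eq N.m_assoc)
qed

theorem proposition3p4:
  fixes G :: "('g, 'a) monoid_scheme" and N :: "('n, 'b) monoid_scheme"
    and H :: "('h, 'c) monoid_scheme"
    and act :: "'g \<Rightarrow> 'n \<Rightarrow> 'n" and ract :: "'n \<Rightarrow> 'h \<Rightarrow> 'n"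
  assumes "left_skew_bracoid G N act"
    and "group H"
    and "transitive_right_action H N ract"
    and "\<forall>g\<in>carrier G. \<forall>h\<in>carrier H. \<forall>\<eta>\<in>carrier N. act g (ract \<eta> h) = ract (act g \<eta>) h"
    and "g \<in> carrier G" and "\<eta> \<in> carrier N" and "h \<in> carrier H"
  shows "beta N ract h (act g \<eta>) =
           alpha N act g (beta N ract h \<eta>) \<otimes>\<^bsub>N\<^esub> beta N ract h \<eta> \<otimes>\<^bsub>N\<^esub> alpha N act g (ract \<one>\<^bsub>N\<^esub> h)"
proof -
  interpret N: group N using left_skew_bracoid_group[OF assms(1)] .
  have ract_closed: "ract \<mu> h \<in> carrier N" if "\<mu> \<in> carrier N" for \<mu>
    using assms(3,7) that by (auto simp: transitive_right_action_def intro: right_action_closed)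
  let ?eh = "ract \<one>\<^bsub>N\<^esub> h"
  have "beta N ract h (act g \<eta>) = inv\<^bsub>N\<^esub> (act g \<eta>) \<otimes>\<^bsub>N\<^esub> act g (ract \<eta> h) \<otimes>\<^bsub>N\<^esub> inv\<^bsub>N\<^esub> ?eh"
    using assms(4-7) by (simp add: beta_def)
  also have "\<dots> = bracoid_lambda N act g (inv\<^bsub>N\<^esub> \<eta> \<otimes>\<^bsub>N\<^esub> ract \<eta> h) \<otimes>\<^bsub>N\<^esub> inv\<^bsub>N\<^esub> ?eh"
    using inv_act_mult_act[OF assms(1,5,6) ract_closed[OF assms(6)]] by simp
  also have "inv\<^bsub>N\<^esub> \<eta> \<otimes>\<^bsub>N\<^esub> ract \<eta> h = beta N ract h \<eta> \<otimes>\<^bsub>N\<^esub> ?eh"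
    using assms(6) ract_closed by (simp add: beta_def N.m_assoc)
  also have "bracoid_lambda N act g (beta N ract h \<eta> \<otimes>\<^bsub>N\<^esub> ?eh) \<otimes>\<^bsub>N\<^esub> inv\<^bsub>N\<^esub> ?eh
      = alpha N act g (beta N ract h \<eta>) \<otimes>\<^bsub>N\<^esub> beta N ract h \<eta> \<otimes>\<^bsub>N\<^esub> alpha N act g ?eh"
    using alpha_mult_mult_alpha[OF assms(1,5)] assms(6) ract_closed by (simp add: beta_def)
  finally show ?thesis .
qed

end
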